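(* Let $k$ and $k'$ be positive-definite kernels on $\Omega\subseteq\mathbb{R}^d$. The following are equivalent: (a) the nonparametric models with covariances $k$ and $k'$ are prediction-equivalent on $\Omega$, i.e. $(k;\emptyset)\sim(k';\emptyset)$; (b) for every finite $\mathcal{X}\subset\Omega$ and every $\sigma^2>0$, the smoother matrices $\mathbf{M}_{\mathcal{X}}=\mathbf{K}_{\mathcal{X}}(\mathbf{K}_{\mathcal{X}}+\sigma^2\mathbf{I})^{-1}$ and $\mathbf{M}'_{\mathcal{X}}=\mathbf{K}'_{\mathcal{X}}(\mathbf{K}'_{\mathcal{X}}+\sigma^2\mathbf{I})^{-1}$ are equal.
   Context: For $\mathcal{X}=\{x_1,\ldots,x_n\}$, $\mathbf{K}_{\mathcal{X}}=[k(x_i,x_j)]_{i,j}$ and $\mathbf{K}'_{\mathcal{X}}=[k'(x_i,x_j)]_{i,j}$. GP regression with prior covariance $k$ and observations $\mathbf{y}\in\mathbb{R}^n$ at $\mathcal{X}$ with noise variance $\sigma^2$ has predictive mean $\mathbb{E}_k(f(x)\mid\mathbf{y})=\mathbf{k}_{x,\mathcal{X}}(\mathbf{K}_{\mathcal{X}}+\sigma^2\mathbf{I})^{-1}\mathbf{y}$ and predictive variance $\mathrm{Var}_k(f(x)\mid\mathbf{y})=k(x,x)-\mathbf{k}_{x,\mathcal{X}}(\mathbf{K}_{\mathcal{X}}+\sigma^2\mathbf{I})^{-1}\mathbf{k}_{x,\mathcal{X}}^\top$, $\mathbf{k}_{x,\mathcal{X}}=[k(x,x_1),\ldots,k(x,x_n)]$.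 $(k;\emptyset)\sim(k';\emptyset)$ means: for every finite $\mathcal{X}\subset\Omega$, every $x\in\Omega$, $\mathbf{y}\in\mathbb{R}^{|\mathcal{X}|}$ and $\sigma^2>0$, the predictive means under $k$ and $k'$ are equal and the predictive variances are equal. *)

theory Defs
  imports "HOL-Analysis.Analysis" "Jordan_Normal_Form.Gauss_Jordan_Elimination"
begin

text \<open>A finite set of inputs is represented by a duplicate-free list xs enumerating it.\<close>

definition pd_kernel_on :: "('a \<Rightarrow> 'a \<Rightarrow> real) \<Rightarrow> 'a set \<Rightarrow> bool" where
  "pd_kernel_on k \<Omega> \<longleftrightarrow>
     (\<forall>x\<in>\<Omega>. \<forall>y\<in>\<Omega>. k x y = k y x) \<and>
     (\<forall>xs c. distinct xs \<longrightarrow> set xs \<subseteq> \<Omega> \<longrightarrow>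
        (\<Sum>i<length xs. \<Sum>j<length xs. c i * c j * k (xs ! i) (xs ! j)) \<ge> 0)"

definition gram :: "('a \<Rightarrow> 'a \<Rightarrow> real) \<Rightarrow> 'a list \<Rightarrow> real mat" where
  "gram k xs = mat (length xs) (length xs) (\<lambda>(i, j). k (xs ! i) (xs ! j))"

definition kvec :: "('a \<Rightarrow> 'a \<Rightarrow> real) \<Rightarrow> 'a \<Rightarrow> 'a list \<Rightarrow> real vec" where
  "kvec k x xs = vec (length xs) (\<lambda>i. k x (xs ! i))"

definition reg_inv :: "('a \<Rightarrow> 'a \<Rightarrow> real) \<Rightarrow> 'a list \<Rightarrow> real \<Rightarrow> real mat" where
  "reg_inv k xs s2 = the (mat_inverse (gram k xs + s2 \<cdot>\<^sub>m 1\<^sub>m (length xs)))"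

definition pred_mean :: "('a \<Rightarrow> 'a \<Rightarrow> real) \<Rightarrow> 'a list \<Rightarrow> real \<Rightarrow> real vec \<Rightarrow> 'a \<Rightarrow> real" where
  "pred_mean k xs s2 y x = kvec k x xs \<bullet> (reg_inv k xs s2 *\<^sub>v y)"

definition pred_var :: "('a \<Rightarrow> 'a \<Rightarrow> real) \<Rightarrow> 'a list \<Rightarrow> real \<Rightarrow> 'a \<Rightarrow> real" where
  "pred_var k xs s2 x = k x x - kvec k x xs \<bullet> (reg_inv k xs s2 *\<^sub>v kvec k x xs)"

definition pred_equiv :: "('a \<Rightarrow> 'a \<Rightarrow> real) \<Rightarrow> ('a \<Rightarrow> 'a \<Rightarrow> real) \<Rightarrow> 'a set \<Rightarrow> bool" where
  "pred_equiv k k' \<Omega> \<longleftrightarrow>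
     (\<forall>xs x y s2. distinct xs \<longrightarrow> set xs \<subseteq> \<Omega> \<longrightarrow> x \<in> \<Omega> \<longrightarrow>
        y \<in> carrier_vec (length xs) \<longrightarrow> s2 > 0 \<longrightarrow>
        pred_mean k xs s2 y x = pred_mean k' xs s2 y x \<and>
        pred_var k xs s2 x = pred_var k' xs s2 x)"

definition smoother :: "('a \<Rightarrow> 'a \<Rightarrow> real) \<Rightarrow> 'a list \<Rightarrow> real \<Rightarrow> real mat" where
  "smoother k xs s2 = gram k xs * reg_inv k xs s2"

end

(* For a positive semidefinite Gram matrix K and s > 0 the matrix K + s I is invertible, and
   K (K + s I)^-1 = I - s (K + s I)^-1, so the smoother matrix determines (K + s I)^-1 and hence K.
   The (i, j) entry of the smoother is the predictive mean at the i-th input for the observation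
   vector e_j, which gives (a) => (b). Conversely, equal smoothers force equal Gram matrices on all
   finite sets, hence k = k' on Omega (take one or two inputs), and then all predictive means and
   variances coincide. *)

theory Submission
  imports Defs "Jordan_Normal_Form.Determinant"
begin

lemma gram_quadratic_form:
  assumes "v \<in> carrier_vec (length xs)"
  shows "v \<bullet> (gram k xs *\<^sub>v v) = (\<Sum>i<length xs. \<Sum>j<length xs. v$i * v$j * k (xs!i) (xs!j))"
  using assms
  by (auto simp: scalar_prod_def gram_def sum_distrib_left atLeast0LessThan mult.assoc
      mult.left_commute intro!: sum.cong)

lemma gram_quadratic_form_nonneg:
  assumes "pd_kernel_on k \<Omega>" and "distinct xs" and "set xs \<subseteq> \<Omega>"
    and "v \<in> carrier_vec (length xs)"
  shows "v \<bullet> (gram k xs *\<^sub>v v) \<ge> 0"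
  using assms unfolding gram_quadratic_form[OF assms(4)] pd_kernel_on_def by blast

lemma mat_inverse_psd_add_smult_one:
  fixes A :: "real mat"
  assumes A: "A \<in> carrier_mat n n"
    and psd: "\<And>v. v \<in> carrier_vec n \<Longrightarrow> v \<bullet> (A *\<^sub>v v) \<ge> 0"
    and s: "s > 0"
  shows "\<exists>R. mat_inverse (A + s \<cdot>\<^sub>m 1\<^sub>m n) = Some R"
proof (rule ccontr)
  let ?B = "A + s \<cdot>\<^sub>m 1\<^sub>m n"
  have B: "?B \<in> carrier_mat n n" using A by simp
  assume "\<nexists>R. mat_inverse ?B = Some R"
  then have "det ?B = 0"
    using mat_inverse(1)[OF B, of "()"] det_non_zero_imp_unit[OF B, of "()"] by auto
  then obtain v where v: "v \<in> carrier_vec n" "v \<noteq> 0\<^sub>v n" "?B *\<^sub>v v = 0\<^sub>v n"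
    unfolding det_0_iff_vec_prod_zero[OF B] by blast
  have "?B *\<^sub>v v = A *\<^sub>v v + s \<cdot>\<^sub>v v"
    using A v(1) by (auto simp: add_mult_distrib_mat_vec intro!: eq_vecI)
  then have "v \<bullet> (?B *\<^sub>v v) = v \<bullet> (A *\<^sub>v v) + s * (v \<bullet> v)"
    using A v(1) by (simp add: scalar_prod_add_distrib)
  moreover have "v \<bullet> v > 0"
    using conjugate_square_greater_0_vec[OF v(1)] v(2) by simp
  ultimately have "v \<bullet> (?B *\<^sub>v v) > 0"
    using psd[OF v(1)] s by (simp add: add_nonneg_pos)
  with v show False by simp
qed

lemma mult_inverse_add_smult_one:
  fixes K :: "'a::field mat"
  assumes K: "K \<in> carrier_mat n n" and inv: "mat_inverse (K + s \<cdot>\<^sub>m 1\<^sub>m n) = Some R"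
  shows "K * R = 1\<^sub>m n - s \<cdot>\<^sub>m R"
proof -
  have R: "R \<in> carrier_mat n n" and "(K + s \<cdot>\<^sub>m 1\<^sub>m n) * R = 1\<^sub>m n"
    using mat_inverse(2)[OF _ inv] K by auto
  moreover have "(K + s \<cdot>\<^sub>m 1\<^sub>m n) * R = K * R + s \<cdot>\<^sub>m R"
    using K R by (simp add: add_mult_distrib_mat mult_smult_assoc_mat[OF one_carrier_mat R])
  ultimately have sum: "K * R + s \<cdot>\<^sub>m R = 1\<^sub>m n" by simp
  show ?thesis
  proof (rule eq_matI)
    fix i j assume "i < dim_row (1\<^sub>m n - s \<cdot>\<^sub>m R)" "j < dim_col (1\<^sub>m n - s \<cdot>\<^sub>m R)"
    moreover from sum have "(K * R + s \<cdot>\<^sub>m R) $$ (i, j) = 1\<^sub>m n $$ (i, j)" by simp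
    ultimately show "(K * R) $$ (i, j) = (1\<^sub>m n - s \<cdot>\<^sub>m R) $$ (i, j)"
      using K R by (simp add: algebra_simps)
  qed (use K R in auto)
qed

lemma eq_if_mult_inverse_add_smult_one_eq:
  fixes K K' :: "'a::field mat"
  assumes K: "K \<in> carrier_mat n n" and K': "K' \<in> carrier_mat n n" and s: "s \<noteq> 0"
    and inv: "mat_inverse (K + s \<cdot>\<^sub>m 1\<^sub>m n) = Some R"
    and inv': "mat_inverse (K' + s \<cdot>\<^sub>m 1\<^sub>m n) = Some R'"
    and eq: "K * R = K' * R'"
  shows "K = K'"
proof -
  let ?A = "K + s \<cdot>\<^sub>m 1\<^sub>m n" and ?A' = "K' + s \<cdot>\<^sub>m 1\<^sub>m n"
  have A: "?A \<in> carrier_mat n n" and A': "?A' \<in> carrier_mat n n" using K K' by auto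
  note inverse = mat_inverse(2)[OF A inv] and inverse' = mat_inverse(2)[OF A' inv']
  have R: "R \<in> carrier_mat n n" and R': "R' \<in> carrier_mat n n" using inverse inverse' by auto
  have shifted: "1\<^sub>m n - s \<cdot>\<^sub>m R = 1\<^sub>m n - s \<cdot>\<^sub>m R'"
    using eq mult_inverse_add_smult_one[OF K inv] mult_inverse_add_smult_one[OF K' inv'] by simp
  have "R = R'"
  proof (rule eq_matI)
    fix i j assume "i < dim_row R'" "j < dim_col R'"
    moreover from shifted have "(1\<^sub>m n - s \<cdot>\<^sub>m R) $$ (i, j) = (1\<^sub>m n - s \<cdot>\<^sub>m R') $$ (i, j)"
      by simp
    ultimately show "R $$ (i, j) = R' $$ (i, j)" using R R' s by simp
  qed (use R R' in auto)
  have "?A = ?A * (R' * ?A')" using inverse' A by simp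
  also have "\<dots> = (?A * R') * ?A'" by (rule assoc_mult_mat[OF A R' A', symmetric])
  also have "\<dots> = ?A'" using inverse \<open>R = R'\<close> A' by simp
  finally have "?A = ?A'" .
  show ?thesis
  proof (rule eq_matI)
    fix i j assume "i < dim_row K'" "j < dim_col K'"
    moreover from \<open>?A = ?A'\<close> have "?A $$ (i, j) = ?A' $$ (i, j)" by simp
    ultimately show "K $$ (i, j) = K' $$ (i, j)" using K K' by simp
  qed (use K K' in auto)
qed

lemma mat_inverse_gram_add_smult_one:
  assumes "pd_kernel_on k \<Omega>" and "distinct xs" and "set xs \<subseteq> \<Omega>" and "s > 0"
  shows "mat_inverse (gram k xs + s \<cdot>\<^sub>m 1\<^sub>m (length xs)) = Some (reg_inv k xs s)"
  using mat_inverse_psd_add_smult_one[of "gram k xs" "length xs" s] gram_quadratic_form_nonneg[OF assms(1-3)] assms(4)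
  unfolding reg_inv_def by (auto simp: gram_def)

lemma reg_inv_carrier_mat:
  assumes "pd_kernel_on k \<Omega>" and "distinct xs" and "set xs \<subseteq> \<Omega>" and "s > 0"
  shows "reg_inv k xs s \<in> carrier_mat (length xs) (length xs)"
  using mat_inverse(2)[OF _ mat_inverse_gram_add_smult_one[OF assms]] by (simp add: gram_def)

lemma pred_mean_unit_vec_at_data:
  assumes R: "reg_inv k xs s \<in> carrier_mat (length xs) (length xs)"
    and i: "i < length xs" and j: "j < length xs"
  shows "pred_mean k xs s (unit_vec (length xs) j) (xs ! i) = smoother k xs s $$ (i, j)"
proof -
  have "kvec k (xs ! i) xs = row (gram k xs) i"
    using i by (intro eq_vecI) (auto simp: kvec_def gram_def)
  moreover have "reg_inv k xs s *\<^sub>v unit_vec (length xs) j = col (reg_inv k xs s) j"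
    using R j by (intro eq_vecI) auto
  ultimately show ?thesis
    using R i j by (simp add: pred_mean_def smoother_def gram_def)
qed

lemma smoother_eq_if_pred_equiv:
  assumes pd: "pd_kernel_on k \<Omega>" and pd': "pd_kernel_on k' \<Omega>"
    and equiv: "pred_equiv k k' \<Omega>"
    and xs: "distinct xs" "set xs \<subseteq> \<Omega>" and s: "s > 0"
  shows "smoother k xs s = smoother k' xs s"
proof (rule eq_matI)
  note R = reg_inv_carrier_mat[OF pd xs s] and R' = reg_inv_carrier_mat[OF pd' xs s]
  fix i j assume "i < dim_row (smoother k' xs s)" "j < dim_col (smoother k' xs s)"
  then have ij: "i < length xs" "j < length xs"
    using R' by (auto simp: smoother_def gram_def)
  moreover from ij xs have "xs ! i \<in> \<Omega>" by auto
  ultimately have "pred_mean k xs s (unit_vec (length xs) j) (xs ! i)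
      = pred_mean k' xs s (unit_vec (length xs) j) (xs ! i)"
    using equiv xs s unfolding pred_equiv_def by simp
  then show "smoother k xs s $$ (i, j) = smoother k' xs s $$ (i, j)"
    using pred_mean_unit_vec_at_data[OF R ij] pred_mean_unit_vec_at_data[OF R' ij] by simp
qed (use reg_inv_carrier_mat[OF pd xs s] reg_inv_carrier_mat[OF pd' xs s] in
     \<open>auto simp: smoother_def gram_def\<close>)

lemma gram_eq_if_smoother_eq:
  assumes "pd_kernel_on k \<Omega>" and "pd_kernel_on k' \<Omega>"
    and "distinct xs" and "set xs \<subseteq> \<Omega>" and "s > 0"
    and "smoother k xs s = smoother k' xs s"
  shows "gram k xs = gram k' xs"
  using eq_if_mult_inverse_add_smult_one_eq[OF _ _ _
      mat_inverse_gram_add_smult_one[OF assms(1,3-5)] mat_inverse_gram_add_smult_one[OF assms(2-5)]]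
    assms(5,6)
  by (simp add: smoother_def gram_def)

lemma eq_on_if_gram_eq:
  assumes gram: "\<And>xs. distinct xs \<Longrightarrow> set xs \<subseteq> \<Omega> \<Longrightarrow> gram k xs = gram k' xs"
    and a: "a \<in> \<Omega>" and b: "b \<in> \<Omega>"
  shows "k a b = k' a b"
proof (cases "a = b")
  case True
  from a have "gram k [a] $$ (0, 0) = gram k' [a] $$ (0, 0)" using gram[of "[a]"] by simp
  with True show ?thesis by (simp add: gram_def)
next
  case False
  with a b have "gram k [a, b] $$ (0, 1) = gram k' [a, b] $$ (0, 1)" using gram[of "[a, b]"] by simp
  then show ?thesis by (simp add: gram_def)
qed

lemma pred_equiv_if_eq_on:
  assumes eq: "\<And>a b. a \<in> \<Omega> \<Longrightarrow> b \<in> \<Omega> \<Longrightarrow> k a b = k' a b"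
  shows "pred_equiv k k' \<Omega>"
proof -
  have "gram k xs = gram k' xs" if "set xs \<subseteq> \<Omega>" for xs
    using that by (auto simp: gram_def subset_iff intro!: eq_matI eq)
  moreover have "kvec k x xs = kvec k' x xs" if "set xs \<subseteq> \<Omega>" "x \<in> \<Omega>" for x xs
    using that by (auto simp: kvec_def subset_iff intro!: eq_vecI eq)
  ultimately show ?thesis
    using eq unfolding pred_equiv_def pred_mean_def pred_var_def reg_inv_def by auto
qed

theorem mainTheorem4:
  fixes k k' :: "real ^ 'd \<Rightarrow> real ^ 'd \<Rightarrow> real" and \<Omega> :: "(real ^ 'd) set"
  assumes "pd_kernel_on k \<Omega>" and "pd_kernel_on k' \<Omega>"
  shows "pred_equiv k k' \<Omega> \<longleftrightarrow>
    (\<forall>xs s2. distinct xs \<longrightarrow> set xs \<subseteq> \<Omega> \<longrightarrow> s2 > 0 \<longrightarrow>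
       smoother k xs s2 = smoother k' xs s2)"
proof
  assume "pred_equiv k k' \<Omega>"
  then show "\<forall>xs s2. distinct xs \<longrightarrow> set xs \<subseteq> \<Omega> \<longrightarrow> s2 > 0 \<longrightarrow>
      smoother k xs s2 = smoother k' xs s2"
    using smoother_eq_if_pred_equiv[OF assms] by blast
next
  assume "\<forall>xs s2. distinct xs \<longrightarrow> set xs \<subseteq> \<Omega> \<longrightarrow> s2 > 0 \<longrightarrow>
      smoother k xs s2 = smoother k' xs s2"
  then have "gram k xs = gram k' xs" if "distinct xs" "set xs \<subseteq> \<Omega>" for xs
    using gram_eq_if_smoother_eq[OF assms that, of 1] that by simp
  then show "pred_equiv k k' \<Omega>"
    by (intro pred_equiv_if_eq_on eq_on_if_gram_eq)
qed

end
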